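(* Let $(P_t)_{t\ge0}$ be a measurable Markovian transition function on a Polish space $E$ with Borel $\sigma$-algebra $\mathcal{B}$, with resolvent $R_\alpha f=\int_0^\infty e^{-\alpha t}P_tf\,dt$. Assume $(P_t)_{t>0}$ is strong Feller (each $P_t$, $t>0$, maps bounded Borel functions to continuous functions), and that there exist a probability measure $\mu$ and a sequence $t_n\nearrow\infty$ such that the family of probability measures $\mu_n(A):=\frac1{t_n}\int_0^{t_n}\mu(P_s1_A)\,ds$, $A\in\mathcal{B}$, is tight. Then for every $\alpha>0$, with $m:=\mu\circ R_\alpha$ (i.e. $m(f)=\int R_\alpha f\,d\mu$), there exists a subsequence $(t_{n_k})_k$ such that $c((P_t)_{t>0},m,(t_{n_k})_k)=0$.
   Context: For a finite measure $m$ and $s_k\nearrow\infty$, $c((P_t)_t,m,(s_k)_k):=\lim_{\varepsilon\searrow0}\sup_{A\in\mathcal{B},\,m(A)\le\varepsilon}\sup_k\frac1{s_k}\int_0^{s_k}m(P_s1_A)\,ds$. A measurable Markovian transition function is a family of Markovian kernels with $P_tP_s=P_{t+s}$ and $(t,x)\mapsto P_tf(x)$ jointly measurable. *)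

theory Defs
  imports "HOL-Probability.Probability"
begin

definition Pf :: "(real \<Rightarrow> 'a \<Rightarrow> 'a::topological_space measure) \<Rightarrow> real \<Rightarrow> ('a \<Rightarrow> real) \<Rightarrow> 'a \<Rightarrow> real" where
  "Pf P t f x = (\<integral>y. f y \<partial>(P t x))"

definition measurable_markov_tf :: "(real \<Rightarrow> 'a \<Rightarrow> 'a::topological_space measure) \<Rightarrow> bool" where
  "measurable_markov_tf P \<longleftrightarrow>
     (\<forall>t\<ge>0. \<forall>x. prob_space (P t x) \<and> sets (P t x) = sets borel) \<and>
     (\<forall>t\<ge>0. P t \<in> borel \<rightarrow>\<^sub>M subprob_algebra borel) \<and>
     (\<forall>s\<ge>0. \<forall>t\<ge>0. \<forall>x. \<forall>A\<in>sets borel.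
         measure (P (t + s) x) A = (\<integral>y. measure (P s y) A \<partial>(P t x))) \<and>
     (\<forall>f::'a \<Rightarrow> real. f \<in> borel_measurable borel \<longrightarrow> bounded (range f) \<longrightarrow>
         (\<lambda>(t, x). Pf P t f x) \<in> borel_measurable (restrict_space borel {0..} \<Otimes>\<^sub>M borel))"

definition strong_feller :: "(real \<Rightarrow> 'a \<Rightarrow> 'a::topological_space measure) \<Rightarrow> bool" where
  "strong_feller P \<longleftrightarrow>
     (\<forall>t>0. \<forall>f::'a \<Rightarrow> real. f \<in> borel_measurable borel \<longrightarrow> bounded (range f) \<longrightarrow>
         continuous_on UNIV (Pf P t f))"

definition resolvent :: "(real \<Rightarrow> 'a \<Rightarrow> 'a::topological_space measure) \<Rightarrow> real \<Rightarrow> ('a \<Rightarrow> real) \<Rightarrow> 'a \<Rightarrow> real" where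
  "resolvent P \<alpha> f x = (LBINT t:{0..}. exp (- \<alpha> * t) * Pf P t f x)"

definition cesaro :: "(real \<Rightarrow> 'a \<Rightarrow> 'a::topological_space measure) \<Rightarrow> 'a measure \<Rightarrow> real \<Rightarrow> 'a set \<Rightarrow> real" where
  "cesaro P \<mu> T A = (1 / T) * (LBINT s:{0..T}. (\<integral>x. Pf P s (indicator A) x \<partial>\<mu>))"

definition tight_family :: "(nat \<Rightarrow> 'a::topological_space set \<Rightarrow> real) \<Rightarrow> bool" where
  "tight_family \<nu> \<longleftrightarrow> (\<forall>\<epsilon>>0. \<exists>K. compact K \<and> (\<forall>n. \<nu> n (- K) \<le> \<epsilon>))"

text \<open>The constant c((P_t),m,(s_k)), where m is given as a functional on functions
  (m(A) = m(1_A)).\<close>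
definition cconst :: "(real \<Rightarrow> 'a \<Rightarrow> 'a::topological_space measure) \<Rightarrow> (('a \<Rightarrow> real) \<Rightarrow> real)
    \<Rightarrow> (nat \<Rightarrow> real) \<Rightarrow> real" where
  "cconst P m s = Lim (at_right 0) (\<lambda>\<epsilon>.
      SUP A \<in> {A \<in> sets borel. m (indicator A) \<le> \<epsilon>}.
        SUP k. (1 / s k) * (LBINT u:{0..s k}. m (Pf P u (indicator A))))"

end

theory Submission
  imports Defs
begin

text \<open>The Cesaro averages of \<open>m(P_s 1_A)\<close> are in fact uniformly absolutely continuous with
  respect to \<open>m\<close> along the whole sequence \<open>t_n\<close>, so the identity subsequence works. If not, there
  are Borel sets \<open>A_j\<close> with \<open>m(A_j) \<le> 2^-j\<close> whose averages stay above some \<open>\<eta> > 0\<close>. The tails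
  \<open>B_j = \<Union>i\<ge>j. A_i\<close> decrease to a set \<open>B\<close> with \<open>m(B) = 0\<close>, and \<open>m(P_u 1_B) \<le> e^(\<alpha>u) m(B)\<close>
  makes \<open>m(P_u 1_B)\<close> vanish for all \<open>u \<ge> 0\<close>. By the strong Feller property,
  \<open>P_1 1_B_j - P_1 1_B\<close> are continuous functions decreasing to \<open>0\<close>, hence uniformly small on a
  compact set \<open>K\<close> (Dini). Writing \<open>P_u = P_(u-1) P_1\<close>, this bounds \<open>m(P_u 1_B_j)\<close> for \<open>u \<ge> 1\<close> by a
  small constant plus \<open>m(P_(u-1) 1_(-K))\<close>, and tightness makes the Cesaro averages of the latter
  small once \<open>K\<close> is large.\<close>

lemma integral_le_enn2real_nn_integral:
  fixes f :: "'b \<Rightarrow> real"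
  assumes f_nonneg: "\<And>x. x \<in> space M \<Longrightarrow> 0 \<le> f x"
    and f_le: "\<And>x. x \<in> space M \<Longrightarrow> ennreal (f x) \<le> g x"
    and finite: "(\<integral>\<^sup>+x. g x \<partial>M) \<noteq> \<infinity>"
  shows "integral\<^sup>L M f \<le> enn2real (\<integral>\<^sup>+x. g x \<partial>M)"
proof (cases "integrable M f")
  case True
  have "integral\<^sup>L M f = enn2real (\<integral>\<^sup>+x. ennreal (f x) \<partial>M)"
    by (rule integral_eq_nn_integral) (use True f_nonneg in auto)
  also have "\<dots> \<le> enn2real (\<integral>\<^sup>+x. g x \<partial>M)"
    by (rule enn2real_mono)
       (use f_le finite in \<open>auto intro!: nn_integral_mono simp: top.not_eq_extremum\<close>)
  finally show ?thesis .
qed (simp add: not_integrable_integral_eq)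

lemma dini_eventually_uniformly_less:
  fixes g :: "nat \<Rightarrow> 'b::metric_space \<Rightarrow> real"
  assumes K: "compact K" and cont: "\<And>j. continuous_on UNIV (g j)"
    and dec: "\<And>j x. g (Suc j) x \<le> g j x" and lim: "\<And>x. (\<lambda>j. g j x) \<longlonglongrightarrow> 0" and e: "0 < e"
  shows "\<exists>J. \<forall>j\<ge>J. \<forall>x\<in>K. g j x < e"
proof (rule ccontr)
  assume "\<not> ?thesis"
  then have "\<forall>J. \<exists>j\<ge>J. \<exists>x\<in>K. e \<le> g j x" by (auto simp: not_less)
  then obtain jj xx where jj: "\<And>J. J \<le> jj J" and xK: "\<And>J. xx J \<in> K"
    and ge: "\<And>J. e \<le> g (jj J) (xx J)"
    by metis
  have antimono: "g j x \<le> g i x" if "i \<le> j" for i j x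
  proof -
    have "decseq (\<lambda>j. g j x)"
      by (rule decseq_SucI) (rule dec)
    then show ?thesis
      using that by (simp add: decseq_def)
  qed
  have ge_diag: "e \<le> g J (xx J)" for J
    using ge[of J] antimono[OF jj[of J], of "xx J"] by linarith
  have "seq_compact K"
    by (rule compact_imp_seq_compact[OF K])
  then obtain x r where "x \<in> K" and r: "strict_mono r" and conv: "(xx \<circ> r) \<longlonglongrightarrow> x"
    using seq_compactE xK by metis
  have "e \<le> g i x" for i
  proof (rule LIMSEQ_le_const)
    have "isCont (g i) x"
      using cont[of i] by (simp add: continuous_on_eq_continuous_at)
    then show "(\<lambda>k. g i ((xx \<circ> r) k)) \<longlonglongrightarrow> g i x"
      using conv by (rule isCont_tendsto_compose)
    show "\<exists>N. \<forall>k\<ge>N. e \<le> g i ((xx \<circ> r) k)"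
    proof (intro exI allI impI)
      fix k assume "i \<le> k"
      then have "i \<le> r k" using seq_suble[OF r, of k] by linarith
      then show "e \<le> g i ((xx \<circ> r) k)"
        using ge_diag[of "r k"] antimono[of i "r k" "xx (r k)"] by simp
    qed
  qed
  then have "e \<le> 0" by (intro LIMSEQ_le_const[OF lim[of x]]) auto
  then show False using e by simp
qed

lemma bounded_range_indicator: "bounded (range (indicator A :: 'b \<Rightarrow> real))"
  unfolding bounded_iff by (intro exI[of _ 1]) (auto simp: indicator_def)

lemma nn_integral_lborel_translate:
  fixes f :: "real \<Rightarrow> ennreal"
  assumes "f \<in> borel_measurable borel"
  shows "(\<integral>\<^sup>+x. f x \<partial>lborel) = (\<integral>\<^sup>+x. f (c + x) \<partial>lborel)"
  using nn_integral_real_affine[OF assms, of 1 c] by simp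

lemma nn_integral_exp_tail:
  fixes a c :: real
  assumes "0 < a"
  shows "(\<integral>\<^sup>+t. ennreal (exp (-a*t)) * indicator {c..} t \<partial>lborel) = ennreal (exp (-a*c) / a)"
proof -
  have restrict: "(\<lambda>t. if t \<in> {c..} then exp (-a*t) else 0) = (\<lambda>t. exp (-a*t) * indicator {c..} t)"
    by (simp add: indicator_def fun_eq_iff)
  have "((\<lambda>t. exp (-a*t) * indicator {c..} t) has_integral exp (-a*c) / a) UNIV"
    using has_integral_restrict_UNIV[THEN iffD2, OF has_integral_exp_minus_to_infinity[OF assms, of c]]
    unfolding restrict .
  then have "(\<integral>\<^sup>+t. ennreal (exp (-a*t) * indicator {c..} t) \<partial>lborel) = ennreal (exp (-a*c) / a)"
    by (intro nn_integral_has_integral_lborel) auto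
  then show ?thesis
    by (simp add: indicator_mult_ennreal mult.commute)
qed

lemma suminf_ennreal_half_powers_from:
  "(\<Sum>i. ennreal ((1/2::real) ^ (i + j))) = ennreal (2 * (1/2) ^ j)"
proof -
  have shift: "(\<lambda>i. (1/2::real) ^ (i + j)) = (\<lambda>i. (1/2) ^ j * (1/2) ^ i)"
    by (simp add: power_add fun_eq_iff)
  have "summable (\<lambda>i. (1/2::real) ^ (i + j))"
    unfolding shift by (intro summable_mult summable_geometric) simp
  then have "(\<Sum>i. ennreal ((1/2::real) ^ (i + j))) = ennreal (\<Sum>i. (1/2::real) ^ (i + j))"
    by (intro suminf_ennreal2) auto
  also have "(\<Sum>i. (1/2::real) ^ (i + j)) = (1/2) ^ j * 2"
    unfolding shift by (subst suminf_mult) (simp_all add: summable_geometric suminf_geometric)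
  finally show ?thesis by (simp add: mult.commute)
qed

lemma cconst_eq_0_if_uniformly_small:
  fixes m :: "('a::topological_space \<Rightarrow> real) \<Rightarrow> real"
  assumes m_zero: "m (\<lambda>_. 0) = 0"
    and small: "\<And>\<eta>. 0 < \<eta> \<Longrightarrow> \<exists>\<delta>>0. \<forall>A\<in>sets borel. m (indicator A) \<le> \<delta> \<longrightarrow>
          (\<forall>k. 1 / s k * (LBINT u:{0..s k}. m (Pf P u (indicator A))) \<le> \<eta>)"
  shows "cconst P m s = 0"
proof -
  define q where "q A = (SUP k. 1 / s k * (LBINT u:{0..s k}. m (Pf P u (indicator A))))" for A
  define G where "G \<epsilon> = (SUP A \<in> {A \<in> sets borel. m (indicator A) \<le> \<epsilon>}. q A)" for \<epsilon>
  have indicator_empty: "indicator {} = (\<lambda>_. 0::real)"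
    by (simp add: fun_eq_iff)
  have "Pf P u (\<lambda>_. 0) = (\<lambda>_. 0)" for u
    by (simp add: Pf_def fun_eq_iff)
  then have q_empty: "q {} = 0"
    by (simp add: q_def m_zero indicator_empty)
  have "(G \<longlongrightarrow> 0) (at_right 0)"
  proof (rule tendstoI)
    fix e :: real assume "0 < e"
    then obtain \<delta> where "0 < \<delta>" and \<delta>: "\<And>A k. A \<in> sets borel \<Longrightarrow> m (indicator A) \<le> \<delta> \<Longrightarrow>
        1 / s k * (LBINT u:{0..s k}. m (Pf P u (indicator A))) \<le> e / 2"
      using small[of "e/2"] by auto
    show "\<forall>\<^sub>F x in at_right 0. dist (G x) 0 < e"
      using eventually_at_right_real[OF \<open>0 < \<delta>\<close>]
    proof (rule eventually_mono)
      fix x assume x: "x \<in> {0<..<\<delta>}"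
      define S where "S = {A \<in> sets borel. m (indicator A) \<le> x}"
      have empty_in_S: "{} \<in> S"
        using x m_zero by (simp add: S_def indicator_empty)
      have q_le: "q A \<le> e / 2" if "A \<in> S" for A
        unfolding q_def by (rule cSUP_least) (use that x \<delta> in \<open>auto simp: S_def\<close>)
      have "G x \<le> e / 2"
        unfolding G_def S_def[symmetric] by (rule cSUP_least) (use empty_in_S q_le in auto)
      moreover have "q {} \<le> G x"
        unfolding G_def S_def[symmetric] using empty_in_S q_le by (intro cSUP_upper bdd_aboveI[where M="e/2"]) auto
      ultimately show "dist (G x) 0 < e"
        using \<open>0 < e\<close> q_empty by simp
    qed
  qed
  moreover have "cconst P m s = Lim (at_right 0) G"
    unfolding cconst_def G_def q_def ..
  ultimately show ?thesis
    by (simp add: tendsto_Lim)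
qed

locale markov_resolvent =
  fixes P :: "real \<Rightarrow> 'a::metric_space \<Rightarrow> 'a measure" and \<mu> :: "'a measure" and \<alpha> :: real
  assumes markov: "measurable_markov_tf P"
    and prob_\<mu>: "prob_space \<mu>" and sets_\<mu>: "sets \<mu> = sets borel"
    and \<alpha>_pos: "0 < \<alpha>"
begin

lemma prob_space_P: "0 \<le> t \<Longrightarrow> prob_space (P t x)"
  using markov unfolding measurable_markov_tf_def by blast

lemma sets_P: "0 \<le> t \<Longrightarrow> sets (P t x) = sets borel"
  using markov unfolding measurable_markov_tf_def by blast

lemma space_P: "0 \<le> t \<Longrightarrow> space (P t x) = UNIV"
  using sets_eq_imp_space_eq[OF sets_P] by simp

lemma chapman_kolmogorov: "0 \<le> s \<Longrightarrow> 0 \<le> t \<Longrightarrow> A \<in> sets borel \<Longrightarrow>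
    measure (P (t + s) x) A = (\<integral>y. measure (P s y) A \<partial>(P t x))"
  using markov unfolding measurable_markov_tf_def by blast

lemma Pf_indicator_measurable: "A \<in> sets borel \<Longrightarrow>
    (\<lambda>(t, x). Pf P t (indicator A) x) \<in> borel_measurable (restrict_space borel {0..} \<Otimes>\<^sub>M borel)"
  using markov bounded_range_indicator[of A] borel_measurable_indicator[of A borel]
  unfolding measurable_markov_tf_def by simp

lemma Pf_indicator: "0 \<le> t \<Longrightarrow> A \<in> sets borel \<Longrightarrow> Pf P t (indicator A) x = measure (P t x) A"
  unfolding Pf_def using space_P by simp

lemma measurable_\<mu>: "measurable \<mu> N = measurable borel N"
  by (rule measurable_cong_sets[OF sets_\<mu> refl])

lemma sigma_finite_\<mu>: "sigma_finite_measure \<mu>"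
  using prob_\<mu> by (rule prob_space_imp_sigma_finite)

lemma pair_sigma_finite_\<mu>_lborel: "pair_sigma_finite \<mu> lborel"
  by (intro pair_sigma_finite.intro sigma_finite_\<mu> lborel.sigma_finite_measure_axioms)

text \<open>With \<open>m = \<mu> R_\<alpha>\<close>,
  the \<open>ennreal\<close>-valued \<open>muP A t\<close>, \<open>resP A u x\<close> and \<open>mP A u\<close> stand for \<open>\<mu>(P_t 1_A)\<close>,
  \<open>R_\<alpha>(P_u 1_A)(x)\<close> and \<open>m(P_u 1_A)\<close> (see \<open>mR_Pf_le\<close>, \<open>mR_indicator\<close>), and \<open>int_muP\<close>,
  \<open>int_mP\<close> are their integrals over \<open>[0, s]\<close>; in \<open>ennreal\<close> no integrability conditions arise.\<close>

definition trans_prob :: "'a set \<Rightarrow> real \<Rightarrow> 'a \<Rightarrow> real" where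
  "trans_prob A t x = (if 0 \<le> t then measure (P t x) A else 0)"

definition muP :: "'a set \<Rightarrow> real \<Rightarrow> ennreal" where
  "muP A t = (\<integral>\<^sup>+x. trans_prob A t x \<partial>\<mu>)"

definition resP :: "'a set \<Rightarrow> real \<Rightarrow> 'a \<Rightarrow> ennreal" where
  "resP A u x = (\<integral>\<^sup>+t. ennreal (exp (-\<alpha>*t) * trans_prob A (t + u) x) * indicator {0..} t \<partial>lborel)"

definition mP :: "'a set \<Rightarrow> real \<Rightarrow> ennreal" where
  "mP A u = (\<integral>\<^sup>+t. ennreal (exp (-\<alpha>*t)) * indicator {0..} t * muP A (t + u) \<partial>lborel)"

definition int_muP :: "'a set \<Rightarrow> real \<Rightarrow> ennreal" where
  "int_muP A s = (\<integral>\<^sup>+v. muP A v * indicator {0..s} v \<partial>lborel)"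

definition int_mP :: "'a set \<Rightarrow> real \<Rightarrow> ennreal" where
  "int_mP A s = (\<integral>\<^sup>+u. mP A u * indicator {0..s} u \<partial>lborel)"

definition mR :: "('a \<Rightarrow> real) \<Rightarrow> real" where
  "mR f = (\<integral>x. resolvent P \<alpha> f x \<partial>\<mu>)"

definition cesaro_mR :: "real \<Rightarrow> 'a set \<Rightarrow> real" where
  "cesaro_mR s A = 1 / s * (LBINT u:{0..s}. mR (Pf P u (indicator A)))"

lemma trans_prob_nonneg: "0 \<le> trans_prob A t x"
  by (simp add: trans_prob_def)

lemma trans_prob_le_1: "trans_prob A t x \<le> 1"
proof (cases "0 \<le> t")
  case True
  interpret prob_space "P t x"
    by (rule prob_space_P[OF True])
  show ?thesis
    using True by (simp add: trans_prob_def)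
qed (simp add: trans_prob_def)

lemma trans_prob_mono:
  assumes "A \<subseteq> B" "B \<in> sets borel"
  shows "trans_prob A t x \<le> trans_prob B t x"
proof (cases "0 \<le> t")
  case True
  interpret prob_space "P t x"
    by (rule prob_space_P[OF True])
  show ?thesis
    using assms True sets_P[OF True] by (simp add: trans_prob_def finite_measure_mono)
qed (simp add: trans_prob_def)

lemma trans_prob_measurable:
  assumes A: "A \<in> sets borel"
  shows "(\<lambda>(t, x). trans_prob A t x) \<in> borel_measurable (borel \<Otimes>\<^sub>M borel)"
proof -
  have clamp: "(\<lambda>(t::real, x::'a). (max t 0, x))
      \<in> measurable (borel \<Otimes>\<^sub>M borel) (restrict_space borel {0..} \<Otimes>\<^sub>M borel)"
  proof -
    have "(\<lambda>(t::real, x::'a). max t 0) \<in> measurable (borel \<Otimes>\<^sub>M borel) (restrict_space borel {0..})"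
      by (rule measurable_restrict_space2) (auto simp: space_pair_measure)
    from measurable_Pair[OF this measurable_snd] show ?thesis
      by (simp add: case_prod_beta')
  qed
  have "(\<lambda>(t, x). Pf P (max t 0) (indicator A) x) \<in> borel_measurable (borel \<Otimes>\<^sub>M borel)"
    using measurable_compose[OF clamp Pf_indicator_measurable[OF A]] by (simp add: case_prod_beta')
  then have "(\<lambda>(t, x). indicator {0..} t * Pf P (max t 0) (indicator A) x)
      \<in> borel_measurable (borel \<Otimes>\<^sub>M borel)"
    by (simp add: case_prod_beta') measurable
  moreover have "(\<lambda>(t, x). indicator {0..} t * Pf P (max t 0) (indicator A) x) = (\<lambda>(t, x). trans_prob A t x)"
    using A by (auto simp: fun_eq_iff trans_prob_def Pf_indicator)
  ultimately show ?thesis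
    by simp
qed

lemma trans_prob_measurable_time: "A \<in> sets borel \<Longrightarrow> (\<lambda>t. trans_prob A t x) \<in> borel_measurable borel"
  using measurable_compose[OF measurable_Pair2'[of x borel borel] trans_prob_measurable] by simp

lemma trans_prob_measurable_space: "A \<in> sets borel \<Longrightarrow> (\<lambda>x. trans_prob A t x) \<in> borel_measurable borel"
  using measurable_compose[OF measurable_Pair1'[of t borel borel] trans_prob_measurable] by simp

lemma trans_prob_Pf:
  assumes "A \<in> sets borel" "0 \<le> t" "0 \<le> u"
  shows "Pf P t (Pf P u (indicator A)) x = trans_prob A (t + u) x"
proof -
  have "Pf P u (indicator A) = (\<lambda>y. measure (P u y) A)"
    using assms by (simp add: fun_eq_iff Pf_indicator)
  then show ?thesis
    using chapman_kolmogorov[of u t A x] assms by (simp add: Pf_def trans_prob_def)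
qed

lemma trans_prob_le_on_compact_compl:
  assumes C: "C \<in> sets borel" and B: "B \<in> sets borel" and K: "- K \<in> sets borel"
    and close: "\<forall>y\<in>K. trans_prob C 1 y \<le> trans_prob B 1 y + d" and "0 \<le> d" and "1 \<le> v"
  shows "trans_prob C v x \<le> trans_prob B v x + d + trans_prob (- K) (v - 1) x"
proof -
  define w where "w = v - 1"
  have w: "0 \<le> w" and v: "v = w + 1"
    using \<open>1 \<le> v\<close> by (simp_all add: w_def)
  interpret prob_space "P w x"
    by (rule prob_space_P[OF w])
  have integrable: "integrable (P w x) (\<lambda>y. trans_prob D 1 y)" if "D \<in> sets borel" for D
    using trans_prob_measurable_space[OF that] measurable_cong_sets[OF sets_P[OF w] refl]
    by (intro integrable_const_bound[where B=1]) (auto simp: trans_prob_nonneg trans_prob_le_1)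
  have by_chapman_kolmogorov: "trans_prob D v x = (\<integral>y. trans_prob D 1 y \<partial>(P w x))"
    if "D \<in> sets borel" for D
    using chapman_kolmogorov[OF _ w that, of 1 x] w by (simp add: trans_prob_def v)
  have integrable_K: "integrable (P w x) (indicator (- K) :: 'a \<Rightarrow> real)"
  proof (rule integrable_const_bound[where B=1])
    show "(indicator (- K) :: 'a \<Rightarrow> real) \<in> borel_measurable (P w x)"
      using K sets_P[OF w] by (intro borel_measurable_indicator) simp
  qed (auto simp: indicator_def)
  have "trans_prob C v x \<le> (\<integral>y. trans_prob B 1 y + d + indicator (- K) y \<partial>(P w x))"
    unfolding by_chapman_kolmogorov[OF C]
  proof (rule integral_mono)
    fix y
    show "trans_prob C 1 y \<le> trans_prob B 1 y + d + indicator (- K) y"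
      using close trans_prob_le_1[of C 1 y] trans_prob_nonneg[of B 1 y] \<open>0 \<le> d\<close>
      by (cases "y \<in> K") auto
  qed (use integrable[OF C] integrable[OF B] integrable_K in auto)
  also have "\<dots> = (\<integral>y. trans_prob B 1 y \<partial>(P w x)) + d + measure (P w x) (- K)"
    using integrable[OF B] integrable_K space_P[OF w] prob_space by simp
  also have "\<dots> = trans_prob B v x + d + trans_prob (- K) (v - 1) x"
    using by_chapman_kolmogorov[OF B] w by (simp add: trans_prob_def w_def)
  finally show ?thesis .
qed

lemma sets_pair_borel_\<mu>: "sets (borel \<Otimes>\<^sub>M \<mu>) = sets (borel \<Otimes>\<^sub>M borel)"
  by (rule sets_pair_measure_cong) (simp_all add: sets_\<mu>)

lemma sets_pair_\<mu>_lborel: "sets (\<mu> \<Otimes>\<^sub>M lborel) = sets (borel \<Otimes>\<^sub>M borel)"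
  by (rule sets_pair_measure_cong) (simp_all add: sets_\<mu>)

lemma trans_prob_measurable_\<mu>: "A \<in> sets borel \<Longrightarrow> (\<lambda>x. trans_prob A t x) \<in> borel_measurable \<mu>"
  unfolding measurable_\<mu> by (rule trans_prob_measurable_space)

lemma muP_measurable:
  assumes A: "A \<in> sets borel"
  shows "muP A \<in> borel_measurable borel"
proof -
  have "(\<lambda>(t, x). trans_prob A t x) \<in> borel_measurable (borel \<Otimes>\<^sub>M \<mu>)"
    unfolding measurable_cong_sets[OF sets_pair_borel_\<mu> refl] by (rule trans_prob_measurable[OF A])
  from measurable_compose[OF this measurable_ennreal] show ?thesis
    unfolding muP_def
    by (intro sigma_finite_measure.borel_measurable_nn_integral[OF sigma_finite_\<mu>])
       (simp add: case_prod_beta')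
qed

lemma muP_le_1: "muP A t \<le> 1"
proof -
  have "muP A t \<le> (\<integral>\<^sup>+x. 1 \<partial>\<mu>)"
    unfolding muP_def by (rule nn_integral_mono) (simp add: trans_prob_le_1)
  then show ?thesis
    using prob_space.emeasure_space_1[OF prob_\<mu>] by simp
qed

lemma muP_mono: "A \<subseteq> B \<Longrightarrow> B \<in> sets borel \<Longrightarrow> muP A t \<le> muP B t"
  unfolding muP_def by (intro nn_integral_mono ennreal_leI trans_prob_mono)

lemma muP_countably_subadditive:
  assumes B: "\<And>i. B i \<in> sets borel"
  shows "muP (\<Union>i. B i) t \<le> (\<Sum>i. muP (B i) t)"
proof -
  have "ennreal (trans_prob (\<Union>i. B i) t x) \<le> (\<Sum>i. ennreal (trans_prob (B i) t x))" for x
  proof (cases "0 \<le> t")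
    case True
    interpret prob_space "P t x"
      by (rule prob_space_P[OF True])
    have "range B \<subseteq> sets (P t x)"
      using B sets_P[OF True] by auto
    from emeasure_subadditive_countably[OF this] show ?thesis
      using True by (simp add: trans_prob_def emeasure_eq_measure)
  qed (simp add: trans_prob_def)
  then have "muP (\<Union>i. B i) t \<le> (\<integral>\<^sup>+x. (\<Sum>i. ennreal (trans_prob (B i) t x)) \<partial>\<mu>)"
    unfolding muP_def by (intro nn_integral_mono)
  also have "\<dots> = (\<Sum>i. muP (B i) t)"
    unfolding muP_def by (rule nn_integral_suminf) (use trans_prob_measurable_\<mu>[OF B] in measurable)
  finally show ?thesis .
qed

lemma muP_le_on_compact_compl:
  assumes C: "C \<in> sets borel" and B: "B \<in> sets borel" and K: "- K \<in> sets borel"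
    and close: "\<forall>y\<in>K. trans_prob C 1 y \<le> trans_prob B 1 y + d" and d: "0 \<le> d" and "1 \<le> v"
  shows "muP C v \<le> muP B v + ennreal d + muP (- K) (v - 1)"
proof -
  have "muP C v \<le> (\<integral>\<^sup>+x. ennreal (trans_prob B v x) + ennreal d + ennreal (trans_prob (- K) (v - 1) x) \<partial>\<mu>)"
    unfolding muP_def
    using trans_prob_le_on_compact_compl[OF C B K close d \<open>1 \<le> v\<close>]
    by (intro nn_integral_mono) (simp add: d trans_prob_nonneg flip: ennreal_plus)
  also have "\<dots> = muP B v + ennreal d + muP (- K) (v - 1)"
    unfolding muP_def
    using trans_prob_measurable_\<mu>[OF B] trans_prob_measurable_\<mu>[OF K] prob_\<mu>
    by (simp add: nn_integral_add prob_space.emeasure_space_1)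
  finally show ?thesis .
qed

lemma resP_integrand_measurable:
  assumes A: "A \<in> sets borel"
  shows "(\<lambda>(x, t). ennreal (exp (-\<alpha>*t) * trans_prob A (t + u) x) * indicator {0..} t)
    \<in> borel_measurable (\<mu> \<Otimes>\<^sub>M lborel)"
proof -
  have "(\<lambda>(x::'a, t::real). (t + u, x)) \<in> measurable (borel \<Otimes>\<^sub>M borel) (borel \<Otimes>\<^sub>M borel)"
    by measurable
  from measurable_compose[OF this trans_prob_measurable[OF A]]
  have "(\<lambda>(x, t). trans_prob A (t + u) x) \<in> borel_measurable (\<mu> \<Otimes>\<^sub>M lborel)"
    unfolding measurable_cong_sets[OF sets_pair_\<mu>_lborel refl] by (simp add: case_prod_beta')
  then show ?thesis
    by (simp add: case_prod_beta') measurable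
qed

lemma resP_measurable: "A \<in> sets borel \<Longrightarrow> resP A u \<in> borel_measurable \<mu>"
  unfolding resP_def using resP_integrand_measurable
  by (intro sigma_finite_measure.borel_measurable_nn_integral[OF lborel.sigma_finite_measure_axioms])
     (simp add: case_prod_beta')

lemma nn_integral_exp_\<alpha>: "(\<integral>\<^sup>+t. ennreal (exp (-\<alpha>*t)) * indicator {0..} t \<partial>lborel) = ennreal (1/\<alpha>)"
  using nn_integral_exp_tail[OF \<alpha>_pos, of 0] by simp

lemma resP_le: "resP A u x \<le> ennreal (1/\<alpha>)"
proof -
  have "resP A u x \<le> (\<integral>\<^sup>+t. ennreal (exp (-\<alpha>*t)) * indicator {0..} t \<partial>lborel)"
    unfolding resP_def
    by (intro nn_integral_mono)
       (auto simp: trans_prob_le_1 trans_prob_nonneg mult_left_le split: split_indicator intro!: ennreal_leI)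
  then show ?thesis
    unfolding nn_integral_exp_\<alpha> .
qed

lemma resP_finite: "resP A u x \<noteq> top"
  using resP_le[of A u x] by (auto simp: top_unique)

lemma nn_integral_resP: "A \<in> sets borel \<Longrightarrow> (\<integral>\<^sup>+x. resP A u x \<partial>\<mu>) = mP A u"
proof -
  assume A: "A \<in> sets borel"
  have inner: "(\<integral>\<^sup>+x. ennreal (exp (-\<alpha>*t) * trans_prob A (t + u) x) * indicator {0..} t \<partial>\<mu>)
      = ennreal (exp (-\<alpha>*t)) * indicator {0..} t * muP A (t + u)" for t
  proof -
    have "(\<integral>\<^sup>+x. ennreal (exp (-\<alpha>*t) * trans_prob A (t + u) x) * indicator {0..} t \<partial>\<mu>)
       = (\<integral>\<^sup>+x. (ennreal (exp (-\<alpha>*t)) * indicator {0..} t) * ennreal (trans_prob A (t + u) x) \<partial>\<mu>)"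
      by (rule nn_integral_cong) (simp add: ennreal_mult trans_prob_nonneg mult_ac)
    also have "\<dots> = ennreal (exp (-\<alpha>*t)) * indicator {0..} t * muP A (t + u)"
      unfolding muP_def by (rule nn_integral_cmult) (use trans_prob_measurable_\<mu>[OF A] in measurable)
    finally show ?thesis .
  qed
  have "(\<integral>\<^sup>+t. (\<integral>\<^sup>+x. ennreal (exp (-\<alpha>*t) * trans_prob A (t + u) x) * indicator {0..} t \<partial>\<mu>) \<partial>lborel)
     = (\<integral>\<^sup>+x. resP A u x \<partial>\<mu>)"
    unfolding resP_def
    by (rule pair_sigma_finite.Fubini'[OF pair_sigma_finite_\<mu>_lborel])
       (use resP_integrand_measurable[OF A, of u] in \<open>simp add: case_prod_beta'\<close>)
  then show ?thesis
    unfolding inner mP_def by simp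
qed

lemma mP_measurable:
  assumes A: "A \<in> sets borel"
  shows "mP A \<in> borel_measurable borel"
proof -
  note muP_measurable[OF A, measurable]
  have "(\<lambda>(u, t). ennreal (exp (-\<alpha>*t)) * indicator {0..} t * muP A (t + u)) \<in> borel_measurable (borel \<Otimes>\<^sub>M lborel)"
    by measurable
  then show ?thesis
    unfolding mP_def
    by (intro sigma_finite_measure.borel_measurable_nn_integral[OF lborel.sigma_finite_measure_axioms]) simp
qed

lemma mP_le: "mP A u \<le> ennreal (1/\<alpha>)"
proof -
  have "mP A u \<le> (\<integral>\<^sup>+t. ennreal (exp (-\<alpha>*t)) * indicator {0..} t \<partial>lborel)"
    unfolding mP_def
    by (intro nn_integral_mono) (use muP_le_1 in \<open>auto simp: mult_left_le split: split_indicator\<close>)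
  then show ?thesis
    unfolding nn_integral_exp_\<alpha> .
qed

lemma mP_finite: "mP A u \<noteq> top"
  using mP_le[of A u] by (auto simp: top_unique)

lemma mP_mono: "A \<subseteq> B \<Longrightarrow> B \<in> sets borel \<Longrightarrow> mP A u \<le> mP B u"
  unfolding mP_def by (intro nn_integral_mono mult_left_mono muP_mono) auto

lemma mP_countably_subadditive:
  assumes B: "\<And>i. B i \<in> sets borel"
  shows "mP (\<Union>i. B i) u \<le> (\<Sum>i. mP (B i) u)"
proof -
  have "mP (\<Union>i. B i) u \<le> (\<integral>\<^sup>+t. (\<Sum>i. ennreal (exp (-\<alpha>*t)) * indicator {0..} t * muP (B i) (t + u)) \<partial>lborel)"
    unfolding mP_def
    by (intro nn_integral_mono) (use muP_countably_subadditive[OF B] in \<open>auto intro!: mult_left_mono\<close>)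
  also have "\<dots> = (\<Sum>i. mP (B i) u)"
    unfolding mP_def by (rule nn_integral_suminf) (use muP_measurable[OF B] in measurable)
  finally show ?thesis .
qed

lemma mP_le_exp_mP_0:
  assumes A: "A \<in> sets borel" and u: "0 \<le> u"
  shows "mP A u \<le> ennreal (exp (\<alpha>*u)) * mP A 0"
proof -
  note muP_measurable[OF A, measurable]
  have "mP A u = (\<integral>\<^sup>+v. ennreal (exp (-\<alpha>*(-u + v))) * indicator {0..} (-u + v) * muP A ((-u + v) + u) \<partial>lborel)"
    unfolding mP_def by (rule nn_integral_lborel_translate) measurable
  also have "\<dots> \<le> (\<integral>\<^sup>+v. ennreal (exp (\<alpha> * u)) * (ennreal (exp (- \<alpha> * v)) * indicator {0..} v * muP A (v + 0)) \<partial>lborel)"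
  proof (intro nn_integral_mono)
    fix v :: real
    have "ennreal (exp (-\<alpha>*(-u + v))) = ennreal (exp (\<alpha>*u)) * ennreal (exp (-\<alpha> * v))"
      by (simp add: ennreal_mult[symmetric] exp_add[symmetric] algebra_simps)
    then show "ennreal (exp (-\<alpha>*(-u + v))) * indicator {0..} (-u + v) * muP A ((-u + v) + u)
       \<le> ennreal (exp (\<alpha> * u)) * (ennreal (exp (- \<alpha> * v)) * indicator {0..} v * muP A (v + 0))"
      using u by (auto simp: mult_ac split: split_indicator)
  qed
  also have "\<dots> = ennreal (exp (\<alpha>*u)) * mP A 0"
    unfolding mP_def by (rule nn_integral_cmult) measurable
  finally show ?thesis .
qed

lemma mP_le_on_compact_compl:
  assumes C: "C \<in> sets borel" and B: "B \<in> sets borel" and K: "- K \<in> sets borel"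
    and close: "\<forall>y\<in>K. trans_prob C 1 y \<le> trans_prob B 1 y + d" and d: "0 \<le> d" and u: "1 \<le> u"
  shows "mP C u \<le> mP B u + ennreal (d / \<alpha>) + mP (- K) (u - 1)"
proof -
  note muP_measurable[OF B, measurable] muP_measurable[OF K, measurable]
  define E where "E t = ennreal (exp (-\<alpha>*t)) * indicator {0..} t" for t
  have "E t * muP C (t + u) \<le> E t * muP B (t + u) + ennreal d * E t + E t * muP (- K) (t + (u - 1))" for t
  proof (cases "0 \<le> t")
    case True
    have "muP C (t + u) \<le> muP B (t + u) + ennreal d + muP (- K) (t + (u - 1))"
      using muP_le_on_compact_compl[OF C B K close d, of "t + u"] True u by (simp add: algebra_simps)
    from mult_left_mono[OF this, of "E t"] show ?thesis
      by (simp add: distrib_left mult_ac)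
  qed (simp add: E_def)
  then have "mP C u \<le> (\<integral>\<^sup>+t. E t * muP B (t + u) + ennreal d * E t + E t * muP (- K) (t + (u - 1)) \<partial>lborel)"
    unfolding mP_def E_def[symmetric] by (intro nn_integral_mono)
  also have "\<dots> = mP B u + ennreal d * ennreal (1/\<alpha>) + mP (- K) (u - 1)"
    unfolding mP_def E_def using nn_integral_exp_\<alpha> by (simp add: nn_integral_add nn_integral_cmult)
  also have "ennreal d * ennreal (1/\<alpha>) = ennreal (d / \<alpha>)"
    using d \<alpha>_pos by (simp add: ennreal_mult[symmetric])
  finally show ?thesis .
qed

lemma Pf_nonneg: "(\<And>y. 0 \<le> f y) \<Longrightarrow> 0 \<le> Pf P t f x"
  unfolding Pf_def by (intro Bochner_Integration.integral_nonneg) auto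

lemma resolvent_nonneg: "(\<And>y. 0 \<le> f y) \<Longrightarrow> 0 \<le> resolvent P \<alpha> f x"
  unfolding resolvent_def set_lebesgue_integral_def
  by (intro Bochner_Integration.integral_nonneg) (auto intro!: mult_nonneg_nonneg Pf_nonneg)

lemma mR_nonneg: "(\<And>y. 0 \<le> f y) \<Longrightarrow> 0 \<le> mR f"
  unfolding mR_def by (intro Bochner_Integration.integral_nonneg) (auto intro!: resolvent_nonneg)

lemma resolvent_Pf_le:
  assumes A: "A \<in> sets borel" and u: "0 \<le> u"
  shows "resolvent P \<alpha> (Pf P u (indicator A)) x \<le> enn2real (resP A u x)"
  unfolding resolvent_def set_lebesgue_integral_def resP_def
proof (rule integral_le_enn2real_nn_integral)
  fix t :: real
  show "0 \<le> indicator {0..} t *\<^sub>R (exp (- \<alpha> * t) * Pf P t (Pf P u (indicator A)) x)"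
    by (auto intro!: mult_nonneg_nonneg Pf_nonneg)
  show "ennreal (indicator {0..} t *\<^sub>R (exp (- \<alpha> * t) * Pf P t (Pf P u (indicator A)) x))
      \<le> ennreal (exp (- \<alpha> * t) * trans_prob A (t + u) x) * indicator {0..} t"
    using trans_prob_Pf[OF A _ u, of t x] by (auto split: split_indicator)
next
  show "(\<integral>\<^sup>+t. ennreal (exp (- \<alpha> * t) * trans_prob A (t + u) x) * indicator {0..} t \<partial>lborel) \<noteq> \<infinity>"
    using resP_le[of A u x] unfolding resP_def by (auto simp: top_unique)
qed

lemma mR_Pf_le:
  assumes A: "A \<in> sets borel" and u: "0 \<le> u"
  shows "ennreal (mR (Pf P u (indicator A))) \<le> mP A u"
proof -
  have "mR (Pf P u (indicator A)) \<le> enn2real (\<integral>\<^sup>+x. resP A u x \<partial>\<mu>)"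
    unfolding mR_def
  proof (rule integral_le_enn2real_nn_integral)
    fix x
    show "0 \<le> resolvent P \<alpha> (Pf P u (indicator A)) x"
      by (auto intro!: resolvent_nonneg Pf_nonneg)
    show "ennreal (resolvent P \<alpha> (Pf P u (indicator A)) x) \<le> resP A u x"
      using ennreal_leI[OF resolvent_Pf_le[OF A u, of x]] by (simp add: ennreal_enn2real_if resP_finite)
  qed (use nn_integral_resP[OF A] mP_finite[of A u] in auto)
  from ennreal_leI[OF this] show ?thesis
    using nn_integral_resP[OF A, of u] mP_finite[of A u] by (simp add: ennreal_enn2real_if)
qed

lemma mR_indicator:
  assumes A: "A \<in> sets borel"
  shows "mR (indicator A) = enn2real (mP A 0)"
proof -
  have resolvent_eq: "resolvent P \<alpha> (indicator A) x = enn2real (resP A 0 x)" for x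
  proof -
    have "resolvent P \<alpha> (indicator A) x = (\<integral>t. exp (-\<alpha>*t) * trans_prob A (t + 0) x * indicator {0..} t \<partial>lborel)"
      unfolding resolvent_def set_lebesgue_integral_def
      by (rule Bochner_Integration.integral_cong)
         (auto simp: Pf_indicator[OF _ A] trans_prob_def split: split_indicator)
    also have "\<dots> = enn2real (resP A 0 x)"
      unfolding resP_def
      using trans_prob_measurable_time[OF A, of x] trans_prob_nonneg[of A _ x]
      by (subst integral_eq_nn_integral) (auto intro!: arg_cong[where f=enn2real] nn_integral_cong
          simp: ennreal_mult' split: split_indicator)
    finally show ?thesis .
  qed
  have nn_integral_eq: "(\<integral>\<^sup>+x. ennreal (enn2real (resP A 0 x)) \<partial>\<mu>) = mP A 0"
    unfolding nn_integral_resP[OF A, symmetric] by (simp add: ennreal_enn2real_if resP_finite)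
  have "mR (indicator A) = enn2real (\<integral>\<^sup>+x. ennreal (enn2real (resP A 0 x)) \<partial>\<mu>)"
    unfolding mR_def resolvent_eq
    by (rule integral_eq_nn_integral) (use resP_measurable[OF A] in auto)
  then show ?thesis
    unfolding nn_integral_eq .
qed

lemma cesaro_mR_le_int_mP:
  assumes A: "A \<in> sets borel" and s: "0 < s"
  shows "ennreal (s * cesaro_mR s A) \<le> int_mP A s"
proof -
  have finite: "int_mP A s \<noteq> \<infinity>"
  proof -
    have "int_mP A s \<le> (\<integral>\<^sup>+u. ennreal (1/\<alpha>) * indicator {0..s} u \<partial>lborel)"
      unfolding int_mP_def by (intro nn_integral_mono) (use mP_le in \<open>auto split: split_indicator\<close>)
    then show ?thesis
      using s by (auto simp: top_unique ennreal_mult_eq_top_iff nn_integral_cmult_indicator)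
  qed
  have "(LBINT u:{0..s}. mR (Pf P u (indicator A))) \<le> enn2real (int_mP A s)"
    unfolding set_lebesgue_integral_def int_mP_def
  proof (rule integral_le_enn2real_nn_integral)
    fix u :: real
    show "0 \<le> indicator {0..s} u *\<^sub>R mR (Pf P u (indicator A))"
      by (auto intro!: mult_nonneg_nonneg mR_nonneg Pf_nonneg)
    show "ennreal (indicator {0..s} u *\<^sub>R mR (Pf P u (indicator A))) \<le> mP A u * indicator {0..s} u"
      using mR_Pf_le[OF A, of u] by (auto split: split_indicator)
  qed (use finite in \<open>simp add: int_mP_def\<close>)
  then have "ennreal (LBINT u:{0..s}. mR (Pf P u (indicator A))) \<le> int_mP A s"
    using finite ennreal_leI by (fastforce simp: ennreal_enn2real_if)
  then show ?thesis
    using s by (simp add: cesaro_mR_def)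
qed

lemma int_muP_le: "0 \<le> s \<Longrightarrow> int_muP C s \<le> ennreal s"
proof -
  assume "0 \<le> s"
  have "int_muP C s \<le> (\<integral>\<^sup>+v. indicator {0..s} v \<partial>lborel)"
    unfolding int_muP_def by (intro nn_integral_mono) (use muP_le_1 in \<open>auto split: split_indicator\<close>)
  then show ?thesis
    using \<open>0 \<le> s\<close> by simp
qed

lemma int_muP_eq_cesaro:
  assumes C: "C \<in> sets borel" and s: "0 < s"
  shows "int_muP C s = ennreal (s * cesaro P \<mu> s C)"
proof -
  have integral_Pf: "(\<integral>x. Pf P v (indicator C) x \<partial>\<mu>) = enn2real (muP C v)" if "0 \<le> v" for v
  proof -
    have "(\<integral>x. Pf P v (indicator C) x \<partial>\<mu>) = (\<integral>x. trans_prob C v x \<partial>\<mu>)"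
      using that by (intro Bochner_Integration.integral_cong) (auto simp: Pf_indicator[OF _ C] trans_prob_def)
    also have "\<dots> = enn2real (muP C v)"
      unfolding muP_def
      by (rule integral_eq_nn_integral) (use trans_prob_measurable_\<mu>[OF C] in \<open>auto simp: trans_prob_nonneg\<close>)
    finally show ?thesis .
  qed
  have muP_finite: "muP C v < \<infinity>" for v
    using muP_le_1[of C v] by (simp add: le_less_trans)
  have "(LBINT v:{0..s}. (\<integral>x. Pf P v (indicator C) x \<partial>\<mu>)) = (\<integral>v. enn2real (muP C v) * indicator {0..s} v \<partial>lborel)"
    unfolding set_lebesgue_integral_def
    by (rule Bochner_Integration.integral_cong) (auto simp: integral_Pf split: split_indicator)
  also have "\<dots> = enn2real (\<integral>\<^sup>+v. ennreal (enn2real (muP C v) * indicator {0..s} v) \<partial>lborel)"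
    by (rule integral_eq_nn_integral) (use muP_measurable[OF C] in auto)
  also have "\<dots> = enn2real (int_muP C s)"
    unfolding int_muP_def
    by (rule arg_cong[where f=enn2real], rule nn_integral_cong) (use muP_finite in \<open>simp split: split_indicator\<close>)
  finally have "s * cesaro P \<mu> s C = enn2real (int_muP C s)"
    using s by (simp add: cesaro_def)
  then show ?thesis
    using int_muP_le[of s C] s by (simp add: le_less_trans)
qed

lemma int_muP_mono: "s \<le> s' \<Longrightarrow> int_muP C s \<le> int_muP C s'"
  unfolding int_muP_def by (intro nn_integral_mono) (auto split: split_indicator)

lemma int_muP_add_le:
  assumes C: "C \<in> sets borel" and "0 \<le> s" "0 \<le> T"
  shows "int_muP C (s + T) \<le> int_muP C s + ennreal T"
proof -
  note muP_measurable[OF C, measurable]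
  have "int_muP C (s + T) \<le> (\<integral>\<^sup>+v. muP C v * indicator {0..s} v + indicator {s..s+T} v \<partial>lborel)"
    unfolding int_muP_def by (intro nn_integral_mono) (use muP_le_1 in \<open>auto split: split_indicator\<close>)
  also have "\<dots> = int_muP C s + ennreal T"
    unfolding int_muP_def using \<open>0 \<le> T\<close> by (subst nn_integral_add) auto
  finally show ?thesis .
qed

lemma nn_integral_muP_shift_le:
  assumes C: "C \<in> sets borel" and "0 \<le> t" "t \<le> T"
  shows "(\<integral>\<^sup>+u. muP C (t + u) * indicator {0..s} u \<partial>lborel) \<le> int_muP C (s + T)"
proof -
  note muP_measurable[OF C, measurable]
  have "(\<integral>\<^sup>+u. muP C (t + u) * indicator {0..s} u \<partial>lborel)
      = (\<integral>\<^sup>+v. muP C (t + (-t + v)) * indicator {0..s} (-t + v) \<partial>lborel)"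
    by (rule nn_integral_lborel_translate) measurable
  also have "\<dots> \<le> int_muP C (s + T)"
    unfolding int_muP_def by (intro nn_integral_mono) (use assms in \<open>auto split: split_indicator\<close>)
  finally show ?thesis .
qed

lemma int_mP_le:
  assumes C: "C \<in> sets borel" and s: "0 \<le> s" and T: "0 \<le> T"
  shows "int_mP C s \<le> ennreal T * int_muP C (s + T) + ennreal (s * exp (-\<alpha>*T) / \<alpha>)"
proof -
  note muP_measurable[OF C, measurable]
  define X where "X t = (\<integral>\<^sup>+u. muP C (t + u) * indicator {0..s} u \<partial>lborel)" for t
  have X_le: "X t \<le> ennreal s" for t
  proof -
    have "X t \<le> (\<integral>\<^sup>+u. indicator {0..s} u \<partial>lborel)"
      unfolding X_def by (intro nn_integral_mono) (use muP_le_1 in \<open>auto split: split_indicator\<close>)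
    then show ?thesis
      using s by simp
  qed
  have "int_mP C s = (\<integral>\<^sup>+u. (\<integral>\<^sup>+t. ennreal (exp (-\<alpha>*t)) * indicator {0..} t * muP C (t + u) * indicator {0..s} u \<partial>lborel) \<partial>lborel)"
    unfolding int_mP_def mP_def by (intro nn_integral_cong nn_integral_multc[symmetric]) measurable
  also have "\<dots> = (\<integral>\<^sup>+t. (\<integral>\<^sup>+u. ennreal (exp (-\<alpha>*t)) * indicator {0..} t * muP C (t + u) * indicator {0..s} u \<partial>lborel) \<partial>lborel)"
    by (rule pair_sigma_finite.Fubini'[OF pair_sigma_finite.intro[OF lborel.sigma_finite_measure_axioms
          lborel.sigma_finite_measure_axioms]]) measurable
  also have "\<dots> = (\<integral>\<^sup>+t. ennreal (exp (-\<alpha>*t)) * indicator {0..} t * X t \<partial>lborel)"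
    unfolding X_def by (intro nn_integral_cong) (simp add: mult.assoc nn_integral_cmult[symmetric])
  also have "\<dots> \<le> (\<integral>\<^sup>+t. int_muP C (s + T) * indicator {0..T} t + ennreal s * (ennreal (exp (-\<alpha>*t)) * indicator {T..} t) \<partial>lborel)"
  proof (intro nn_integral_mono)
    fix t :: real
    consider "t < 0" | "0 \<le> t" "t \<le> T" | "T < t"
      by linarith
    then show "ennreal (exp (-\<alpha>*t)) * indicator {0..} t * X t
        \<le> int_muP C (s + T) * indicator {0..T} t + ennreal s * (ennreal (exp (-\<alpha>*t)) * indicator {T..} t)"
    proof cases
      case 2
      have "ennreal (exp (-\<alpha>*t)) * indicator {0..} t * X t \<le> 1 * X t"
        using 2 \<alpha>_pos by (intro mult_right_mono) (auto simp: indicator_def)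
      also have "\<dots> \<le> int_muP C (s + T) * indicator {0..T} t + 0"
        using nn_integral_muP_shift_le[OF C 2, of s] 2 by (simp add: X_def)
      also have "\<dots> \<le> int_muP C (s + T) * indicator {0..T} t + ennreal s * (ennreal (exp (-\<alpha>*t)) * indicator {T..} t)"
        by (rule add_left_mono) simp
      finally show ?thesis .
    next
      case 3
      have "ennreal (exp (-\<alpha>*t)) * indicator {0..} t * X t \<le> ennreal (exp (-\<alpha>*t)) * 1 * ennreal s"
        using X_le[of t] by (intro mult_mono) (auto simp: indicator_def)
      then show ?thesis
        using 3 by (simp add: indicator_def mult.commute)
    qed simp
  qed
  also have "\<dots> = int_muP C (s + T) * ennreal T + ennreal s * ennreal (exp (-\<alpha>*T) / \<alpha>)"
    using T nn_integral_exp_tail[OF \<alpha>_pos, of T]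
    by (simp add: nn_integral_add nn_integral_cmult_indicator nn_integral_cmult)
  also have "\<dots> = ennreal T * int_muP C (s + T) + ennreal (s * exp (-\<alpha>*T) / \<alpha>)"
    using s \<alpha>_pos by (simp add: ennreal_mult[symmetric] mult.commute)
  finally show ?thesis .
qed

lemma mP_Inter_tails_eq_0:
  assumes A: "\<And>j. A j \<in> sets borel" and small: "\<And>j. mP (A j) 0 \<le> ennreal ((1/2) ^ j)" and u: "0 \<le> u"
  shows "mP (\<Inter>j. \<Union>i. A (i + j)) u = 0"
proof -
  define B where "B = (\<Inter>j. \<Union>i. A (i + j))"
  have B: "B \<in> sets borel"
    using A by (auto simp: B_def)
  have "enn2real (mP B 0) \<le> 2 * (1/2) ^ j" for j
  proof -
    have "mP B 0 \<le> mP (\<Union>i. A (i + j)) 0"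
      using A by (intro mP_mono) (auto simp: B_def)
    also have "\<dots> \<le> (\<Sum>i. mP (A (i + j)) 0)"
      by (rule mP_countably_subadditive[OF A])
    also have "\<dots> \<le> (\<Sum>i. ennreal ((1/2::real) ^ (i + j)))"
      by (intro suminf_le small) auto
    also have "\<dots> = ennreal (2 * (1/2) ^ j)"
      by (rule suminf_ennreal_half_powers_from)
    finally show ?thesis
      by (intro enn2real_leI) auto
  qed
  moreover have "(\<lambda>j. 2 * (1/2::real) ^ j) \<longlonglongrightarrow> 0"
    by (intro tendsto_mult_right_zero LIMSEQ_power_zero) simp
  ultimately have "enn2real (mP B 0) \<le> 0"
    using LIMSEQ_le_const[of "\<lambda>j. 2 * (1/2::real) ^ j" 0 "enn2real (mP B 0)"] by blast
  then have "enn2real (mP B 0) = 0"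
    using enn2real_nonneg[of "mP B 0"] by linarith
  then have "mP B 0 = 0"
    using mP_finite[of B 0] by (auto simp: enn2real_eq_0_iff)
  then show ?thesis
    using mP_le_exp_mP_0[OF B u] by (simp add: B_def)
qed

lemma int_mP_le_of_close:
  assumes A: "A \<in> sets borel" and C: "C \<in> sets borel" and "A \<subseteq> C" and B: "B \<in> sets borel"
    and K: "- K \<in> sets borel" and close: "\<forall>y\<in>K. trans_prob C 1 y \<le> trans_prob B 1 y + d" and d: "0 \<le> d"
    and null: "\<And>u. 0 \<le> u \<Longrightarrow> mP B u = 0" and s: "0 \<le> s"
  shows "int_mP A s \<le> ennreal (exp \<alpha>) * mP A 0 + ennreal (s * d / \<alpha>) + int_mP (- K) s"
proof -
  note mP_measurable[OF A, measurable] mP_measurable[OF K, measurable]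
  have "mP A u * indicator {0..s} u \<le> ennreal (exp \<alpha>) * mP A 0 * indicator {0..1} u
      + ennreal (d / \<alpha>) * indicator {0..s} u + mP (- K) (u - 1) * indicator {1..s+1} u" for u
  proof (cases "0 \<le> u \<and> u \<le> s")
    case True
    show ?thesis
    proof (cases "u \<le> 1")
      case True
      have "mP A u \<le> ennreal (exp (\<alpha>*u)) * mP A 0"
        using mP_le_exp_mP_0[OF A] \<open>0 \<le> u \<and> u \<le> s\<close> by simp
      also have "\<dots> \<le> ennreal (exp \<alpha>) * mP A 0"
        using True \<alpha>_pos by (intro mult_right_mono ennreal_leI) (auto simp: mult_left_le)
      finally show ?thesis
        using \<open>0 \<le> u \<and> u \<le> s\<close> True by (simp add: add.assoc add_increasing2)
    next
      case False
      have "mP A u \<le> mP C u"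
        by (rule mP_mono[OF \<open>A \<subseteq> C\<close> C])
      also have "\<dots> \<le> mP B u + ennreal (d / \<alpha>) + mP (- K) (u - 1)"
        using False by (intro mP_le_on_compact_compl[OF C B K close d]) auto
      finally show ?thesis
        using \<open>0 \<le> u \<and> u \<le> s\<close> False null[of u] by (simp add: indicator_def add_increasing)
    qed
  qed simp
  then have "int_mP A s \<le> (\<integral>\<^sup>+u. ennreal (exp \<alpha>) * mP A 0 * indicator {0..1} u
      + ennreal (d / \<alpha>) * indicator {0..s} u + mP (- K) (u - 1) * indicator {1..s+1} u \<partial>lborel)"
    unfolding int_mP_def by (intro nn_integral_mono)
  also have "\<dots> = ennreal (exp \<alpha>) * mP A 0 + ennreal (s * d / \<alpha>)
      + (\<integral>\<^sup>+u. mP (- K) (u - 1) * indicator {1..s+1} u \<partial>lborel)"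
  proof -
    have "ennreal (d / \<alpha>) * ennreal s = ennreal (s * d / \<alpha>)"
      using d s \<alpha>_pos by (simp add: ennreal_mult[symmetric] mult.commute)
    then show ?thesis
      using s by (simp add: nn_integral_add nn_integral_cmult_indicator)
  qed
  also have "(\<integral>\<^sup>+u. mP (- K) (u - 1) * indicator {1..s+1} u \<partial>lborel)
      = (\<integral>\<^sup>+w. mP (- K) ((1 + w) - 1) * indicator {1..s+1} (1 + w) \<partial>lborel)"
    by (rule nn_integral_lborel_translate) measurable
  also have "\<dots> = int_mP (- K) s"
    unfolding int_mP_def by (intro nn_integral_cong) (simp split: split_indicator)
  finally show ?thesis .
qed

lemma exists_exp_le:
  assumes "0 < \<epsilon>"
  shows "\<exists>T\<ge>0. exp (-\<alpha>*T) / \<alpha> \<le> \<epsilon>"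
proof -
  define T where "T = max 0 (ln (1 / (\<alpha> * \<epsilon>))) / \<alpha>"
  have "ln (1 / (\<alpha> * \<epsilon>)) \<le> \<alpha> * T"
    using \<alpha>_pos by (simp add: T_def)
  then have "exp (-\<alpha>*T) \<le> exp (- ln (1 / (\<alpha> * \<epsilon>)))"
    by simp
  also have "\<dots> = \<alpha> * \<epsilon>"
    using \<alpha>_pos assms by (simp add: exp_minus)
  finally show ?thesis
    using \<alpha>_pos by (intro exI[of _ T]) (auto simp: T_def field_simps)
qed

end

locale strong_feller_tight = markov_resolvent +
  fixes tn :: "nat \<Rightarrow> real"
  assumes strong_feller: "strong_feller P"
    and tn_mono: "mono tn" and tn_at_top: "filterlim tn at_top sequentially" and tn_pos: "\<And>n. 0 < tn n"
    and tight: "tight_family (\<lambda>n. cesaro P \<mu> (tn n))"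
begin

lemma trans_prob_1_continuous: "C \<in> sets borel \<Longrightarrow> continuous_on UNIV (\<lambda>y. trans_prob C 1 y)"
  using strong_feller bounded_range_indicator[of C]
  unfolding strong_feller_def by (simp add: trans_prob_def Pf_indicator[symmetric])

lemma trans_prob_1_uniformly_close:
  assumes C: "\<And>j. C j \<in> sets borel" and C_Suc: "\<And>j. C (Suc j) \<subseteq> C j"
    and K: "compact K" and d: "0 < d"
  shows "\<exists>J. \<forall>j\<ge>J. \<forall>y\<in>K. trans_prob (C j) 1 y \<le> trans_prob (\<Inter>j. C j) 1 y + d"
proof -
  define B where "B = (\<Inter>j. C j)"
  have B: "B \<in> sets borel"
    using C by (auto simp: B_def)
  define g where "g j y = trans_prob (C j) 1 y - trans_prob B 1 y" for j y
  have "g (Suc j) y \<le> g j y" for j y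
    unfolding g_def using trans_prob_mono[OF C_Suc C] by simp
  moreover have "(\<lambda>j. g j y) \<longlonglongrightarrow> 0" for y
  proof -
    interpret prob_space "P 1 y"
      by (rule prob_space_P) simp
    have "(\<lambda>j. measure (P 1 y) (C j)) \<longlonglongrightarrow> measure (P 1 y) B"
      unfolding B_def using C sets_P[of 1 y]
      by (intro finite_Lim_measure_decseq decseq_SucI C_Suc) auto
    from tendsto_diff[OF this tendsto_const[of "measure (P 1 y) B"]] show ?thesis
      by (simp add: g_def trans_prob_def)
  qed
  moreover have "continuous_on UNIV (g j)" for j
    unfolding g_def by (intro continuous_on_diff trans_prob_1_continuous C B)
  ultimately obtain J where J: "\<And>j y. J \<le> j \<Longrightarrow> y \<in> K \<Longrightarrow> g j y < d"
    using dini_eventually_uniformly_less[OF K _ _ _ d] by blast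
  have "trans_prob (C j) 1 y \<le> trans_prob B 1 y + d" if "J \<le> j" "y \<in> K" for j y
    using J[OF that] unfolding g_def by linarith
  then show ?thesis
    unfolding B_def by blast
qed

lemma int_mP_le_compact_compl:
  assumes A: "\<And>j. A j \<in> sets borel" and small: "\<And>j. mP (A j) 0 \<le> ennreal ((1/2) ^ j)"
    and K: "compact K" and d: "0 < d"
  shows "\<exists>J. \<forall>j\<ge>J. \<forall>s\<ge>0.
    int_mP (A j) s \<le> ennreal (exp \<alpha> * (1/2) ^ j) + ennreal (s * d / \<alpha>) + int_mP (- K) s"
proof -
  define C where "C j = (\<Union>i. A (i + j))" for j
  have C: "C j \<in> sets borel" for j
    using A by (auto simp: C_def)
  have C_Suc: "C (Suc j) \<subseteq> C j" for j
  proof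
    fix y assume "y \<in> C (Suc j)"
    then obtain i where "y \<in> A (Suc i + j)"
      by (auto simp: C_def)
    then show "y \<in> C j"
      unfolding C_def by blast
  qed
  have A_C: "A j \<subseteq> C j" for j
  proof
    fix y assume "y \<in> A j"
    then have "y \<in> A (0 + j)"
      by simp
    then show "y \<in> C j"
      unfolding C_def by blast
  qed
  have K_compl: "- K \<in> sets borel"
    using compact_imp_closed[OF K] by (intro borel_open) auto
  obtain J where J: "\<And>j y. J \<le> j \<Longrightarrow> y \<in> K \<Longrightarrow> trans_prob (C j) 1 y \<le> trans_prob (\<Inter>j. C j) 1 y + d"
    using trans_prob_1_uniformly_close[of C, OF C C_Suc K d] by blast
  have "int_mP (A j) s \<le> ennreal (exp \<alpha>) * mP (A j) 0 + ennreal (s * d / \<alpha>) + int_mP (- K) s"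
    if "J \<le> j" "0 \<le> s" for j s
  proof (rule int_mP_le_of_close[OF A C A_C _ K_compl])
    show "mP (\<Inter>j. C j) u = 0" if "0 \<le> u" for u
      using mP_Inter_tails_eq_0[OF A small that] by (simp add: C_def)
  qed (use C J d that in auto)
  moreover have "ennreal (exp \<alpha>) * mP (A j) 0 \<le> ennreal (exp \<alpha> * (1/2) ^ j)" for j
    using mult_left_mono[OF small[of j], of "ennreal (exp \<alpha>)"] by (simp add: ennreal_mult)
  ultimately show ?thesis
    by (meson add_right_mono order.trans)
qed

text \<open>Tightness controls \<open>int_muP (- K)\<close> only at the times \<open>tn n\<close>; between them we use
  monotonicity for small times and \<open>int_muP C (s + T) \<le> int_muP C s + T\<close> for large ones.\<close>

lemma int_muP_compact_compl_small:
  assumes \<epsilon>: "0 < \<epsilon>" and T: "0 \<le> T"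
  shows "\<exists>K. compact K \<and> (\<forall>n. int_muP (- K) (tn n + T) \<le> ennreal (\<epsilon> * tn n))"
proof -
  define S where "S = 2 * T / \<epsilon>"
  obtain M where M: "S + T \<le> tn M"
    using tn_at_top unfolding filterlim_at_top eventually_sequentially by blast
  have tn_0_le: "tn 0 \<le> tn n" for n
    using tn_mono by (simp add: mono_def)
  define \<epsilon>' where "\<epsilon>' = \<epsilon> / 2 * tn 0 / tn M"
  have "0 < \<epsilon>'"
    using \<epsilon> tn_pos by (simp add: \<epsilon>'_def)
  then obtain K where K: "compact K" and tight_K: "\<And>n. cesaro P \<mu> (tn n) (- K) \<le> \<epsilon>'"
    using tight unfolding tight_family_def by blast
  have K_compl: "- K \<in> sets borel"
    using compact_imp_closed[OF K] by (intro borel_open) auto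
  have at_tn: "int_muP (- K) (tn n) \<le> ennreal (tn n * \<epsilon>')" for n
    using int_muP_eq_cesaro[OF K_compl tn_pos[of n]] tight_K[of n] tn_pos[of n]
    by (simp add: ennreal_leI)
  have "int_muP (- K) (tn n + T) \<le> ennreal (\<epsilon> * tn n)" for n
  proof (cases "S \<le> tn n")
    case True
    have "\<epsilon>' \<le> \<epsilon> / 2"
      using \<epsilon> tn_pos tn_0_le[of M] by (simp add: \<epsilon>'_def field_simps)
    then have "tn n * \<epsilon>' \<le> \<epsilon> / 2 * tn n"
      using tn_pos[of n] by (simp add: mult.commute mult_left_mono)
    moreover have "T \<le> \<epsilon> / 2 * tn n"
      using True \<epsilon> by (simp add: S_def field_simps)
    ultimately have "tn n * \<epsilon>' + T \<le> \<epsilon> * tn n"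
      by linarith
    have "int_muP (- K) (tn n + T) \<le> int_muP (- K) (tn n) + ennreal T"
      using int_muP_add_le[OF K_compl, of "tn n" T] tn_pos[of n] T by simp
    also have "\<dots> \<le> ennreal (tn n * \<epsilon>') + ennreal T"
      by (rule add_right_mono[OF at_tn])
    also have "\<dots> = ennreal (tn n * \<epsilon>' + T)"
      using tn_pos[of n] \<open>0 < \<epsilon>'\<close> T by (simp add: ennreal_plus)
    also have "\<dots> \<le> ennreal (\<epsilon> * tn n)"
      by (rule ennreal_leI) fact
    finally show ?thesis .
  next
    case False
    have "int_muP (- K) (tn n + T) \<le> int_muP (- K) (tn M)"
      using False M by (intro int_muP_mono) auto
    also have "\<dots> \<le> ennreal (\<epsilon> / 2 * tn 0)"
      using at_tn[of M] tn_pos[of M] by (simp add: \<epsilon>'_def)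
    also have "\<dots> \<le> ennreal (\<epsilon> * tn n)"
      using \<epsilon> tn_pos[of 0] tn_0_le[of n] by (intro ennreal_leI) simp
    finally show ?thesis .
  qed
  with K show ?thesis
    by blast
qed

lemma int_mP_compact_compl_small:
  assumes \<eta>: "0 < \<eta>"
  shows "\<exists>K. compact K \<and> (\<forall>n. int_mP (- K) (tn n) \<le> ennreal (\<eta> * tn n))"
proof -
  obtain T where T: "0 \<le> T" and exp_T: "exp (-\<alpha>*T) / \<alpha> \<le> \<eta> / 2"
    using exists_exp_le[of "\<eta> / 2"] \<eta> by auto
  define \<epsilon> where "\<epsilon> = \<eta> / 2 / (T + 1)"
  have \<epsilon>: "0 < \<epsilon>"
    using \<eta> T by (simp add: \<epsilon>_def)
  have "T * \<epsilon> \<le> (T + 1) * \<epsilon>"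
    using \<epsilon> by (intro mult_right_mono) auto
  also have "(T + 1) * \<epsilon> = \<eta> / 2"
    using T by (simp add: \<epsilon>_def field_simps)
  finally have T_\<epsilon>: "T * \<epsilon> \<le> \<eta> / 2" .
  obtain K where K: "compact K" and small: "\<And>n. int_muP (- K) (tn n + T) \<le> ennreal (\<epsilon> * tn n)"
    using int_muP_compact_compl_small[OF \<epsilon> T] by blast
  have K_compl: "- K \<in> sets borel"
    using compact_imp_closed[OF K] by (intro borel_open) auto
  have "int_mP (- K) (tn n) \<le> ennreal (\<eta> * tn n)" for n
  proof -
    have tn: "0 < tn n"
      by (rule tn_pos)
    have "T * (\<epsilon> * tn n) \<le> \<eta> / 2 * tn n"
      using mult_right_mono[OF T_\<epsilon>, of "tn n"] tn by (simp add: mult.assoc)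
    moreover have "tn n * exp (-\<alpha>*T) / \<alpha> \<le> \<eta> / 2 * tn n"
      using mult_left_mono[OF exp_T, of "tn n"] tn by (simp add: mult.commute)
    ultimately have sum_le: "T * (\<epsilon> * tn n) + tn n * exp (-\<alpha>*T) / \<alpha> \<le> \<eta> * tn n"
      by linarith
    have "int_mP (- K) (tn n) \<le> ennreal T * int_muP (- K) (tn n + T) + ennreal (tn n * exp (-\<alpha>*T) / \<alpha>)"
      using int_mP_le[OF K_compl _ T, of "tn n"] tn by simp
    also have "\<dots> \<le> ennreal T * ennreal (\<epsilon> * tn n) + ennreal (tn n * exp (-\<alpha>*T) / \<alpha>)"
      by (intro add_right_mono mult_left_mono small) simp
    also have "ennreal T * ennreal (\<epsilon> * tn n) = ennreal (T * (\<epsilon> * tn n))"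
      using T \<epsilon> tn by (intro ennreal_mult[symmetric]) auto
    also have "ennreal (T * (\<epsilon> * tn n)) + ennreal (tn n * exp (-\<alpha>*T) / \<alpha>)
        = ennreal (T * (\<epsilon> * tn n) + tn n * exp (-\<alpha>*T) / \<alpha>)"
      using T \<epsilon> tn \<alpha>_pos by (intro ennreal_plus[symmetric]) auto
    also have "\<dots> \<le> ennreal (\<eta> * tn n)"
      by (rule ennreal_leI[OF sum_le])
    finally show ?thesis .
  qed
  with K show ?thesis
    by blast
qed

lemma int_mP_tails_small:
  assumes A: "\<And>j. A j \<in> sets borel" and small: "\<And>j. mP (A j) 0 \<le> ennreal ((1/2) ^ j)"
    and \<eta>: "0 < \<eta>"
  shows "\<exists>J. \<forall>j\<ge>J. \<forall>n. int_mP (A j) (tn n) \<le> ennreal (\<eta> * tn n)"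
proof -
  obtain K where K: "compact K" and K_small: "\<And>n. int_mP (- K) (tn n) \<le> ennreal (\<eta> / 3 * tn n)"
    using int_mP_compact_compl_small[of "\<eta> / 3"] \<eta> by auto
  have "0 < \<alpha> * \<eta> / 3"
    using \<alpha>_pos \<eta> by simp
  then obtain J where J: "\<And>j s. J \<le> j \<Longrightarrow> 0 \<le> s \<Longrightarrow>
      int_mP (A j) s \<le> ennreal (exp \<alpha> * (1/2) ^ j) + ennreal (s * (\<alpha> * \<eta> / 3) / \<alpha>) + int_mP (- K) s"
    using int_mP_le_compact_compl[OF A small K] by blast
  have "(\<lambda>j. exp \<alpha> * (1/2::real) ^ j) \<longlonglongrightarrow> 0"
    by (intro tendsto_mult_right_zero LIMSEQ_power_zero) simp
  moreover have "0 < \<eta> / 3 * tn 0"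
    using \<eta> tn_pos[of 0] by simp
  ultimately have "\<forall>\<^sub>F j in sequentially. exp \<alpha> * (1/2::real) ^ j < \<eta> / 3 * tn 0"
    by (rule order_tendstoD(2))
  then obtain N where N: "\<And>j. N \<le> j \<Longrightarrow> exp \<alpha> * (1/2::real) ^ j < \<eta> / 3 * tn 0"
    unfolding eventually_sequentially by blast
  have "int_mP (A j) (tn n) \<le> ennreal (\<eta> * tn n)" if "max N J \<le> j" for j n
  proof -
    define s where "s = tn n"
    have s: "0 < s" "tn 0 \<le> s"
      using tn_pos tn_mono by (auto simp: s_def mono_def)
    have "\<eta> / 3 * tn 0 \<le> \<eta> / 3 * s"
      using s(2) \<eta> by (intro mult_left_mono) auto
    then have "exp \<alpha> * (1/2) ^ j + \<eta> / 3 * s + \<eta> / 3 * s \<le> \<eta> * s"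
      using N[of j] that by simp
    have "int_mP (A j) s \<le> ennreal (exp \<alpha> * (1/2) ^ j) + ennreal (s * (\<alpha> * \<eta> / 3) / \<alpha>) + int_mP (- K) s"
      using J[of j s] s that by simp
    also have "\<dots> \<le> ennreal (exp \<alpha> * (1/2) ^ j) + ennreal (\<eta> / 3 * s) + ennreal (\<eta> / 3 * s)"
    proof -
      have "s * (\<alpha> * \<eta> / 3) / \<alpha> = \<eta> / 3 * s"
        using \<alpha>_pos by simp
      then show ?thesis
        using K_small[of n] by (simp only: s_def add_left_mono)
    qed
    also have "\<dots> = ennreal (exp \<alpha> * (1/2) ^ j + \<eta> / 3 * s + \<eta> / 3 * s)"
    proof -
      have "0 \<le> exp \<alpha> * (1/2::real) ^ j" "0 \<le> \<eta> / 3 * s"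
        using s \<eta> by auto
      then show ?thesis
        by (simp only: ennreal_plus add_nonneg_nonneg)
    qed
    also have "\<dots> \<le> ennreal (\<eta> * s)"
      by (rule ennreal_leI) fact
    finally show ?thesis
      by (simp add: s_def)
  qed
  then show ?thesis
    by blast
qed

lemma cesaro_mR_uniformly_small:
  assumes \<eta>: "0 < \<eta>"
  shows "\<exists>\<delta>>0. \<forall>A\<in>sets borel. mR (indicator A) \<le> \<delta> \<longrightarrow> (\<forall>n. cesaro_mR (tn n) A \<le> \<eta>)"
proof (rule ccontr)
  assume "\<not> ?thesis"
  then have "\<forall>\<delta>>0. \<exists>A\<in>sets borel. mR (indicator A) \<le> \<delta> \<and> (\<exists>n. \<eta> < cesaro_mR (tn n) A)"
    by (simp add: not_le)
  then have "\<exists>A n. A \<in> sets borel \<and> mR (indicator A) \<le> (1/2) ^ j \<and> \<eta> < cesaro_mR (tn n) A" for j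
    by (rule allE[of _ "(1/2) ^ j"]) auto
  then obtain A n where A: "\<And>j. A j \<in> sets borel" and mR_A: "\<And>j. mR (indicator (A j)) \<le> (1/2) ^ j"
    and large: "\<And>j. \<eta> < cesaro_mR (tn (n j)) (A j)"
    by metis
  have small: "mP (A j) 0 \<le> ennreal ((1/2) ^ j)" for j
    using ennreal_leI[OF mR_A[of j, unfolded mR_indicator[OF A]]] mP_finite[of "A j" 0]
    by (simp add: ennreal_enn2real_if)
  obtain J where J: "\<And>n. int_mP (A J) (tn n) \<le> ennreal (\<eta> * tn n)"
    using int_mP_tails_small[of A, OF A small \<eta>] by blast
  have "ennreal (tn (n J) * cesaro_mR (tn (n J)) (A J)) \<le> ennreal (\<eta> * tn (n J))"
    using cesaro_mR_le_int_mP[OF A tn_pos] J order.trans by blast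
  then have "cesaro_mR (tn (n J)) (A J) \<le> \<eta>"
    using tn_pos[of "n J"] \<eta> by (simp add: ennreal_le_iff mult.commute)
  then show False
    using large[of J] by simp
qed

end

theorem proposition3p1:
  fixes P :: "real \<Rightarrow> 'a::polish_space \<Rightarrow> 'a measure"
    and \<mu> :: "'a measure" and tn :: "nat \<Rightarrow> real"
  assumes "measurable_markov_tf P"
    and "strong_feller P"
    and "prob_space \<mu>" and "sets \<mu> = sets borel"
    and "mono tn" and "filterlim tn at_top sequentially" and "\<forall>n. tn n > 0"
    and "tight_family (\<lambda>n. cesaro P \<mu> (tn n))"
  shows "\<forall>\<alpha>>0. \<exists>r::nat \<Rightarrow> nat. strict_mono r \<and>
           cconst P (\<lambda>f. \<integral>x. resolvent P \<alpha> f x \<partial>\<mu>) (tn \<circ> r) = 0"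
proof (intro allI impI)
  fix \<alpha> :: real
  assume "0 < \<alpha>"
  interpret strong_feller_tight P \<mu> \<alpha> tn
    using assms \<open>0 < \<alpha>\<close>
    by (simp add: strong_feller_tight_def strong_feller_tight_axioms_def markov_resolvent_def)
  have "cconst P mR tn = 0"
  proof (rule cconst_eq_0_if_uniformly_small)
    show "mR (\<lambda>_. 0) = 0"
      by (simp add: mR_def resolvent_def Pf_def)
    fix \<eta> :: real
    assume "0 < \<eta>"
    from cesaro_mR_uniformly_small[OF this]
    show "\<exists>\<delta>>0. \<forall>A\<in>sets borel. mR (indicator A) \<le> \<delta> \<longrightarrow>
        (\<forall>k. 1 / tn k * (LBINT u:{0..tn k}. mR (Pf P u (indicator A))) \<le> \<eta>)"
      unfolding cesaro_mR_def .
  qed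
  then show "\<exists>r::nat \<Rightarrow> nat. strict_mono r \<and> cconst P (\<lambda>f. \<integral>x. resolvent P \<alpha> f x \<partial>\<mu>) (tn \<circ> r) = 0"
    using strict_mono_id by (intro exI[of _ id]) (simp add: mR_def[abs_def])
qed

end
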